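(* Consider the following Naive Uniform Elimination algorithm on a stream of $K$ arms, with input parameters $\varepsilon\in(0,1)$ and $\delta\in(0,1)$: maintain a single stored arm and a best empirical reward $\widehat{\mu}^*$ initialized to $0$; for each arriving $\mathsf{arm}_i$, pull it $\frac{16}{\varepsilon^2}\log(\frac{K}{\delta})$ times and record its empirical mean reward $\widehat{\mu}_i$; if $\widehat{\mu}_i>\widehat{\mu}^*$, discard the stored arm, store $\mathsf{arm}_i$ and set $\widehat{\mu}^*=\widehat{\mu}_i$; otherwise discard $\mathsf{arm}_i$ and keep the stored arm; at the end of the stream return the stored arm $\overline{\mathsf{arm}}$. Then for every integer $c\geq 1$, the returned arm has mean reward \[\mu_{\overline{\mathsf{arm}}}\geq \mu^*-c\cdot\varepsilon\] with probability at least $1-\left(\tfrac{1}{2}\right)^{c^2}\cdot\delta$.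
   Context: There are $K$ arms arriving one by one in a stream; each arm has an unknown reward distribution supported on $[0,1]$ with mean $\mu_i$, pulls give independent samples, and $\mu^*=\max_i\mu_i$. *)

theory Defs
  imports "HOL-Probability.Probability"
begin

definition nue_pulls :: "nat \<Rightarrow> real \<Rightarrow> real \<Rightarrow> nat" where
  "nue_pulls K eps delta = nat \<lceil>16 / eps ^ 2 * ln (real K / delta)\<rceil>"

text \<open>Sample space outcome: omega (i, j) is the reward of the j-th pull of arm i.
  Empirical mean of arm i after N pulls.\<close>
definition emp_mean :: "nat \<Rightarrow> (nat \<times> nat \<Rightarrow> real) \<Rightarrow> nat \<Rightarrow> real" where
  "emp_mean N omega i = (\<Sum>j<N. omega (i, j)) / real N"

text \<open>One step of Naive Uniform Elimination: state = (stored arm, best empirical reward).\<close>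
definition nue_step :: "nat \<Rightarrow> (nat \<times> nat \<Rightarrow> real) \<Rightarrow> nat \<Rightarrow> nat \<times> real \<Rightarrow> nat \<times> real" where
  "nue_step N omega i st =
     (if emp_mean N omega i > snd st then (i, emp_mean N omega i) else st)"

text \<open>Output of the algorithm on arms 0,...,K-1 arriving in this order; best empirical
  reward initialised to 0, stored arm initialised to the first arm (arm 0).\<close>
definition nue_output :: "nat \<Rightarrow> nat \<Rightarrow> (nat \<times> nat \<Rightarrow> real) \<Rightarrow> nat" where
  "nue_output K N omega = fst (fold (nue_step N omega) [0..<K] (0, 0))"

definition pulls_space :: "nat \<Rightarrow> nat \<Rightarrow> (nat \<Rightarrow> real measure) \<Rightarrow> (nat \<times> nat \<Rightarrow> real) measure" where
  "pulls_space K N D = PiM ({..<K} \<times> {..<N}) (\<lambda>(i, j). D i)"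

definition arm_mean :: "(nat \<Rightarrow> real measure) \<Rightarrow> nat \<Rightarrow> real" where
  "arm_mean D i = integral\<^sup>L (D i) (\<lambda>x. x)"

end

theory Submission
  imports Defs
begin

text \<open>
  By Hoeffding's inequality each empirical mean, taken over \<open>N \<ge> 16/\<epsilon>\<^sup>2 \<cdot> ln (K/\<delta>)\<close>
  pulls, is off by at least \<open>c\<epsilon>/2\<close> with probability at most \<open>2 exp (-2N(c\<epsilon>/2)\<^sup>2) \<le>
  2 (\<delta>/K)\<^bsup>8c\<^sup>2\<^esup>\<close>, and a union bound over the \<open>K\<close> arms leaves failure probability at most
  \<open>(1/2)\<^bsup>c\<^sup>2\<^esup> \<delta>\<close> once \<open>K \<ge> 2\<close>. If all empirical means are \<open>c\<epsilon>/2\<close>-accurate, the stored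
  empirical reward dominates the empirical mean of the best arm, hence exceeds \<open>\<mu>\<^sup>* - c\<epsilon>/2\<close>, and
  the stored arm's true mean is within another \<open>c\<epsilon>/2\<close> of it.
\<close>

lemma (in product_prob_space) indep_vars_PiM_components:
  assumes "finite I" "inj_on t J" "t ` J \<subseteq> I" "\<And>j. j \<in> J \<Longrightarrow> sets (N j) = sets (M (t j))"
  shows "prob_space.indep_vars (Pi\<^sub>M I M) N (\<lambda>j \<omega>. \<omega> (t j)) J"
proof (cases "J = {}")
  case True
  then show ?thesis by (simp add: P.indep_vars_def P.indep_sets_def)
next
  case False
  have component: "(\<lambda>\<omega>. \<omega> (t j)) \<in> measurable (Pi\<^sub>M I M) (N j)" if "j \<in> J" for j
    using measurable_component_singleton[of "t j" I M] assms(3) that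
    by (simp add: image_subset_iff measurable_cong_sets[OF refl assms(4)[OF that]])
  have marginal: "distr (Pi\<^sub>M I M) (N j) (\<lambda>\<omega>. \<omega> (t j)) = M (t j)" if "j \<in> J" for j
  proof -
    have "distr (Pi\<^sub>M I M) (N j) (\<lambda>\<omega>. \<omega> (t j)) = distr (Pi\<^sub>M I M) (M (t j)) (\<lambda>\<omega>. \<omega> (t j))"
      using assms(4) that by (intro distr_cong) auto
    also have "\<dots> = M (t j)"
      using assms(3) that by (intro distr_PiM_component) (auto simp: M.prob_space_axioms)
    finally show ?thesis .
  qed
  have "distr (Pi\<^sub>M I M) (Pi\<^sub>M J N) (\<lambda>\<omega>. \<lambda>j\<in>J. \<omega> (t j))
      = distr (Pi\<^sub>M I M) (Pi\<^sub>M J (\<lambda>j. M (t j))) (\<lambda>\<omega>. \<lambda>j\<in>J. \<omega> (t j))"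
    using assms(4) by (intro distr_cong sets_PiM_cong) auto
  also have "\<dots> = Pi\<^sub>M J (\<lambda>j. M (t j))"
    using assms(1-3) by (intro distr_reorder) auto
  also have "\<dots> = Pi\<^sub>M J (\<lambda>j. distr (Pi\<^sub>M I M) (N j) (\<lambda>\<omega>. \<omega> (t j)))"
    using marginal by (intro PiM_cong) auto
  finally show ?thesis
    using False component by (subst P.indep_vars_iff_distr_eq_PiM') auto
qed

lemma measurable_pull:
  assumes "sets (D i) = sets borel" "i < K" "j < N"
  shows "(\<lambda>\<omega>. \<omega> (i, j)) \<in> borel_measurable (pulls_space K N D)"
  using measurable_component_singleton[of "(i, j)" "{..<K} \<times> {..<N}" "\<lambda>(i, j). D i"] assms
  unfolding pulls_space_def by (simp add: measurable_cong_sets[OF refl assms(1)])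

lemma measurable_emp_mean:
  assumes "sets (D i) = sets borel" "i < K"
  shows "(\<lambda>\<omega>. emp_mean N \<omega> i) \<in> borel_measurable (pulls_space K N D)"
  unfolding emp_mean_def using assms
  by (auto intro!: borel_measurable_divide borel_measurable_sum measurable_pull)

lemma prob_emp_mean_deviation_ge:
  fixes D :: "nat \<Rightarrow> real measure"
  assumes prob: "\<And>k. k < K \<Longrightarrow> prob_space (D k)"
    and borel: "\<And>k. k < K \<Longrightarrow> sets (D k) = sets borel"
    and bounded: "\<And>k. k < K \<Longrightarrow> AE x in D k. 0 \<le> x \<and> x \<le> 1"
    and i: "i < K" and N: "0 < N" and t: "0 \<le> t"
  shows "measure (pulls_space K N D)
           {\<omega> \<in> space (pulls_space K N D). t \<le> \<bar>emp_mean N \<omega> i - arm_mean D i\<bar>}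
         \<le> 2 * exp (- 2 * real N * t\<^sup>2)"
proof -
  \<comment> \<open>Arms beyond \<open>K\<close> are invisible in the product; padding them makes \<open>M\<close> a family of
    probability spaces, as the locale \<open>product_prob_space\<close> demands.\<close>
  define M where "M = (\<lambda>(k :: nat, j :: nat). if k < K then D k else return borel (0::real))"
  interpret product_prob_space M "{..<K} \<times> {..<N}"
    by (rule product_prob_spaceI) (auto simp: M_def prob prob_space_return split: prod.split)
  have space_eq: "pulls_space K N D = Pi\<^sub>M ({..<K} \<times> {..<N}) M"
    unfolding pulls_space_def by (rule PiM_cong) (auto simp: M_def)
  have pull: "(\<lambda>\<omega>. \<omega> (i, j)) \<in> borel_measurable (Pi\<^sub>M ({..<K} \<times> {..<N}) M)" if "j < N" for j
    using measurable_pull[of D i K j N] borel i that by (simp add: space_eq)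
  have marginal: "distr (Pi\<^sub>M ({..<K} \<times> {..<N}) M) borel (\<lambda>\<omega>. \<omega> (i, j)) = D i" if "j < N" for j
  proof -
    have "distr (Pi\<^sub>M ({..<K} \<times> {..<N}) M) borel (\<lambda>\<omega>. \<omega> (i, j))
        = distr (Pi\<^sub>M ({..<K} \<times> {..<N}) M) (M (i, j)) (\<lambda>\<omega>. \<omega> (i, j))"
      using borel i by (intro distr_cong) (auto simp: M_def)
    also have "\<dots> = M (i, j)"
      using i that by (intro distr_PiM_component) (auto simp: M.prob_space_axioms)
    finally show ?thesis using i by (simp add: M_def)
  qed
  interpret Hoeffding_ineq_iid "Pi\<^sub>M ({..<K} \<times> {..<N}) M" "{..<N}" "\<lambda>j \<omega>. \<omega> (i, j)"
    "\<lambda>\<omega>. \<omega> (i, 0)" 0 1 "arm_mean D i"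
  proof unfold_locales
    show "indep_vars (\<lambda>_. borel) (\<lambda>j \<omega>. \<omega> (i, j)) {..<N}"
      using borel i by (intro indep_vars_PiM_components) (auto simp: M_def inj_on_def)
    show "distr (Pi\<^sub>M ({..<K} \<times> {..<N}) M) borel (\<lambda>\<omega>. \<omega> (i, j))
        = distr (Pi\<^sub>M ({..<K} \<times> {..<N}) M) borel (\<lambda>\<omega>. \<omega> (i, 0))" if "j \<in> {..<N}" for j
      using marginal N that by simp
    show "random_variable borel (\<lambda>\<omega>. \<omega> (i, 0))"
      using pull N by simp
    have "AE x in distr (Pi\<^sub>M ({..<K} \<times> {..<N}) M) borel (\<lambda>\<omega>. \<omega> (i, 0)). x \<in> {0..1}"
      unfolding marginal[OF N] using bounded[OF i] by simp
    then show "AE \<omega> in Pi\<^sub>M ({..<K} \<times> {..<N}) M. \<omega> (i, 0) \<in> {0..1}"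
      by (rule AE_distrD[OF pull[OF N]])
    show "arm_mean D i \<equiv> expectation (\<lambda>\<omega>. \<omega> (i, 0))"
      using integral_distr[OF pull[OF N], of "\<lambda>x. x"] marginal[OF N]
      by (simp add: arm_mean_def)
  qed simp
  show ?thesis
    using Hoeffding_ineq_abs_ge'[OF t] N by (simp add: space_eq emp_mean_def lessThan_empty_iff)
qed

lemma prob_emp_means_accurate:
  fixes D :: "nat \<Rightarrow> real measure"
  assumes prob: "\<And>k. k < K \<Longrightarrow> prob_space (D k)"
    and borel: "\<And>k. k < K \<Longrightarrow> sets (D k) = sets borel"
    and bounded: "\<And>k. k < K \<Longrightarrow> AE x in D k. 0 \<le> x \<and> x \<le> 1"
    and N: "0 < N" and t: "0 \<le> t"
  shows "1 - real K * (2 * exp (- 2 * real N * t\<^sup>2))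
         \<le> measure (pulls_space K N D)
             {\<omega> \<in> space (pulls_space K N D). \<forall>i<K. \<bar>emp_mean N \<omega> i - arm_mean D i\<bar> < t}"
proof -
  interpret prob_space "pulls_space K N D"
    unfolding pulls_space_def by (rule prob_space_PiM) (auto simp: prob)
  define B where "B i = {\<omega> \<in> space (pulls_space K N D). t \<le> \<bar>emp_mean N \<omega> i - arm_mean D i\<bar>}"
    for i
  have B_events: "B i \<in> events" if "i < K" for i
    using measurable_emp_mean[of D i K N] borel that unfolding B_def by measurable
  have "prob (\<Union>i<K. B i) \<le> (\<Sum>i<K. prob (B i))"
    using B_events by (intro finite_measure_subadditive_finite) auto
  also have "\<dots> \<le> real K * (2 * exp (- 2 * real N * t\<^sup>2))"
    using sum_bounded_above[of "{..<K}" "\<lambda>i. prob (B i)"]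
      prob_emp_mean_deviation_ge[OF prob borel bounded _ N t] by (simp add: B_def)
  finally have "1 - real K * (2 * exp (- 2 * real N * t\<^sup>2))
      \<le> prob (space (pulls_space K N D) - (\<Union>i<K. B i))"
    using B_events by (subst prob_compl) auto
  also have "space (pulls_space K N D) - (\<Union>i<K. B i)
      = {\<omega> \<in> space (pulls_space K N D). \<forall>i<K. \<bar>emp_mean N \<omega> i - arm_mean D i\<bar> < t}"
    by (auto simp: B_def not_le)
  finally show ?thesis .
qed

lemma nue_fold_ge_emp_mean:
  "snd s \<le> snd (fold (nue_step N \<omega>) xs s)
   \<and> (\<forall>i \<in> set xs. emp_mean N \<omega> i \<le> snd (fold (nue_step N \<omega>) xs s))"
proof (induction xs arbitrary: s)
  case Nil
  then show ?case by simp
next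
  case (Cons x xs)
  have "snd s \<le> snd (nue_step N \<omega> x s)" "emp_mean N \<omega> x \<le> snd (nue_step N \<omega> x s)"
    by (auto simp: nue_step_def)
  then show ?case
    using Cons.IH[of "nue_step N \<omega> x s"] by (auto intro: order_trans)
qed

lemma nue_fold_stored:
  "fold (nue_step N \<omega>) xs s = s
   \<or> fst (fold (nue_step N \<omega>) xs s) \<in> set xs
     \<and> snd (fold (nue_step N \<omega>) xs s) = emp_mean N \<omega> (fst (fold (nue_step N \<omega>) xs s))"
proof (induction xs arbitrary: s)
  case Nil
  then show ?case by simp
next
  case (Cons x xs)
  have "nue_step N \<omega> x s = s \<or> nue_step N \<omega> x s = (x, emp_mean N \<omega> x)"
    by (simp add: nue_step_def)
  then show ?case
    using Cons.IH[of "nue_step N \<omega> x s"] by auto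
qed

lemma measurable_nue_fold:
  assumes "\<And>i. i \<in> set xs \<Longrightarrow> (\<lambda>\<omega>. emp_mean N \<omega> i) \<in> borel_measurable M"
  shows "(\<lambda>\<omega>. fold (nue_step N \<omega>) xs s) \<in> measurable M (count_space UNIV \<Otimes>\<^sub>M borel)"
  using assms
proof (induction xs rule: rev_induct)
  case Nil
  show ?case by (simp add: space_pair_measure)
next
  case (snoc x xs)
  define F where "F = (\<lambda>\<omega>. fold (nue_step N \<omega>) xs s)"
  have [measurable]: "F \<in> measurable M (count_space UNIV \<Otimes>\<^sub>M borel)"
    "(\<lambda>\<omega>. emp_mean N \<omega> x) \<in> borel_measurable M"
    using snoc by (auto simp: F_def)
  have "(\<lambda>\<omega>. fold (nue_step N \<omega>) (xs @ [x]) s)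
      = (\<lambda>\<omega>. if snd (F \<omega>) < emp_mean N \<omega> x then (x, emp_mean N \<omega> x) else F \<omega>)"
    unfolding F_def by (simp add: nue_step_def)
  then show ?case by simp
qed

lemma measurable_nue_output:
  assumes "\<And>i. i < K \<Longrightarrow> sets (D i) = sets borel"
  shows "nue_output K N \<in> measurable (pulls_space K N D) (count_space UNIV)"
proof -
  have "(\<lambda>\<omega>. fold (nue_step N \<omega>) [0..<K] (0, 0))
      \<in> measurable (pulls_space K N D) (count_space UNIV \<Otimes>\<^sub>M borel)"
    using assms by (intro measurable_nue_fold measurable_emp_mean) auto
  then show ?thesis
    unfolding nue_output_def[abs_def] by measurable
qed

lemma nue_output_mean_ge:
  fixes mu :: "nat \<Rightarrow> real"
  assumes K: "1 \<le> K" and accurate: "\<And>i. i < K \<Longrightarrow> \<bar>emp_mean N \<omega> i - mu i\<bar> < t"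
    and "0 \<le> mu 0"
  shows "Max (mu ` {..<K}) - 2 * t \<le> mu (nue_output K N \<omega>)"
proof -
  have "Max (mu ` {..<K}) \<in> mu ` {..<K}"
    using K by (intro Max_in) (auto simp: lessThan_empty_iff)
  then obtain best where best: "best < K" "mu best = Max (mu ` {..<K})"
    by auto
  define st where "st = fold (nue_step N \<omega>) [0..<K] (0, 0)"
  have "emp_mean N \<omega> best \<le> snd st"
    using nue_fold_ge_emp_mean[of "(0, 0)" N \<omega> "[0..<K]"] best(1) by (simp add: st_def)
  then have below: "Max (mu ` {..<K}) < snd st + t"
    using accurate[OF best(1)] best(2) by linarith
  from nue_fold_stored[of N \<omega> "[0..<K]" "(0, 0)"]
  consider "st = (0, 0)" | "fst st < K" "snd st = emp_mean N \<omega> (fst st)"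
    unfolding st_def by auto
  then show ?thesis
  proof cases
    case 1
    \<comment> \<open>No empirical mean beat the initial reward \<open>0\<close>, so the default arm \<open>0\<close> is returned.\<close>
    then show ?thesis
      using below accurate[of 0] K \<open>0 \<le> mu 0\<close> by (simp add: nue_output_def st_def[symmetric])
  next
    case 2
    then show ?thesis
      using below accurate[of "fst st"] by (simp add: nue_output_def st_def[symmetric])
  qed
qed

lemma nue_pulls_pos:
  assumes "1 \<le> K" "0 < eps" "0 < delta" "delta < 1"
  shows "0 < nue_pulls K eps delta"
proof -
  have "0 < 16 / eps\<^sup>2 * ln (K / delta)"
    using assms by (simp add: field_simps)
  then show ?thesis by (simp add: nue_pulls_def)
qed

lemma arm_mean_nonneg:
  assumes "AE x in D i. 0 \<le> x"
  shows "0 \<le> arm_mean D i"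
  unfolding arm_mean_def using assms by (rule integral_nonneg_AE)

lemma nue_failure_bound:
  fixes K c :: nat and eps delta N :: real
  assumes K: "2 \<le> K" and eps: "0 < eps" and delta: "0 < delta" "delta < 1" and c: "1 \<le> c"
    and N: "16 / eps\<^sup>2 * ln (K / delta) \<le> N"
  shows "real K * (2 * exp (- 2 * N * (c * eps / 2)\<^sup>2)) \<le> (1/2) ^ c\<^sup>2 * delta"
proof -
  define x where "x = delta / K"
  define n where "n = 8 * c\<^sup>2 - 1"
  \<comment> \<open>The exponential is at most \<open>x\<^bsup>8c\<^sup>2\<^esup>\<close>, and \<open>x \<le> 1/2\<close> because \<open>K \<ge> 2\<close>.\<close>
  have x: "0 < x" "x \<le> 1/2"
    using K delta by (simp_all add: x_def)
  have n: "8 * c\<^sup>2 = Suc n" "c\<^sup>2 \<le> n - 1"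
    using c by (auto simp: n_def)
  have "real (Suc n) * ln (K / delta) = 16 / eps\<^sup>2 * ln (K / delta) * (c\<^sup>2 * eps\<^sup>2 / 2)"
    unfolding n(1)[symmetric] using eps by simp
  also have "\<dots> \<le> N * (c\<^sup>2 * eps\<^sup>2 / 2)"
    using N by (rule mult_right_mono) simp
  also have "\<dots> = 2 * N * (c * eps / 2)\<^sup>2"
    by (simp add: power_mult_distrib power_divide)
  finally have "exp (- 2 * N * (c * eps / 2)\<^sup>2) \<le> exp (real (Suc n) * ln x)"
    using K delta by (simp add: x_def ln_div algebra_simps)
  also have "\<dots> = x * x ^ n"
    using x by (simp only: exp_of_nat_mult exp_ln power_Suc)
  also have "\<dots> \<le> x * (1/2) ^ n"
    using x by (intro mult_left_mono power_mono) auto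
  finally have "real K * (2 * exp (- 2 * N * (c * eps / 2)\<^sup>2)) \<le> real K * (2 * (x * (1/2) ^ n))"
    using K by simp
  also have "\<dots> = delta * (2 * (1/2) ^ n)"
    using K by (simp add: x_def)
  also have "2 * (1/2::real) ^ n = (1/2) ^ (n - 1)"
    using n by (cases n) auto
  also have "delta * (1/2) ^ (n - 1) \<le> delta * (1/2) ^ c\<^sup>2"
    using n delta by (intro mult_left_mono power_decreasing) auto
  finally show ?thesis by (simp add: mult.commute)
qed

theorem lemma5p2:
  fixes K :: nat and D :: "nat \<Rightarrow> real measure" and eps delta :: real and c :: nat
  assumes "K \<ge> 1"
    and "0 < eps" "eps < 1" "0 < delta" "delta < 1"
    and "\<And>i. i < K \<Longrightarrow> prob_space (D i)"
    and "\<And>i. i < K \<Longrightarrow> sets (D i) = sets borel"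
    and "\<And>i. i < K \<Longrightarrow> (AE x in D i. 0 \<le> x \<and> x \<le> 1)"
    and "c \<ge> 1"
  shows "measure (pulls_space K (nue_pulls K eps delta) D)
           {omega \<in> space (pulls_space K (nue_pulls K eps delta) D).
              arm_mean D (nue_output K (nue_pulls K eps delta) omega)
                \<ge> Max (arm_mean D ` {..<K}) - real c * eps}
         \<ge> 1 - (1/2) ^ (c^2) * delta"
proof -
  note K = assms(1) and eps = assms(2,3) and delta = assms(4,5) and c = assms(9)
    and arms = assms(6-8)
  define N where "N = nue_pulls K eps delta"
  interpret prob_space "pulls_space K N D"
    unfolding pulls_space_def by (rule prob_space_PiM) (auto simp: arms)
  have N_ge: "16 / eps\<^sup>2 * ln (K / delta) \<le> real N"
    unfolding N_def nue_pulls_def by (rule real_nat_ceiling_ge)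
  have N: "0 < N"
    unfolding N_def using K eps(1) delta by (rule nue_pulls_pos)
  define E where "E = {\<omega> \<in> space (pulls_space K N D).
                        Max (arm_mean D ` {..<K}) - real c * eps \<le> arm_mean D (nue_output K N \<omega>)}"
  have "E \<in> events"
    using measurable_nue_output[of K D N] arms unfolding E_def by measurable
  have "1 - (1/2) ^ c\<^sup>2 * delta \<le> prob E"
  proof (cases "K = 1")
    case True
    \<comment> \<open>The union bound is too weak here (\<open>\<delta>/K\<close> may be close to \<open>1\<close>), but the output is forced.\<close>
    then have "E = space (pulls_space K N D)"
      using eps by (auto simp: E_def nue_output_def nue_step_def lessThan_Suc)
    then show ?thesis using delta by (simp add: prob_space)
  next
    case False
    have mean_0: "0 \<le> arm_mean D 0"
      using arms(3)[of 0] K by (intro arm_mean_nonneg) auto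
    have "1 - (1/2) ^ c\<^sup>2 * delta \<le> 1 - real K * (2 * exp (- 2 * real N * (c * eps / 2)\<^sup>2))"
      using nue_failure_bound[OF _ eps(1) delta c N_ge] False K by simp
    also have "\<dots> \<le> prob {\<omega> \<in> space (pulls_space K N D).
                             \<forall>i<K. \<bar>emp_mean N \<omega> i - arm_mean D i\<bar> < c * eps / 2}"
      using eps by (intro prob_emp_means_accurate[OF arms N]) auto
    also have "\<dots> \<le> prob E"
      using nue_output_mean_ge[where mu = "arm_mean D" and t = "c * eps / 2", OF K _ mean_0]
        \<open>E \<in> events\<close>
      by (intro finite_measure_mono) (auto simp: E_def)
    finally show ?thesis .
  qed
  then show ?thesis by (simp add: E_def N_def)
qed

end
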